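(* Let $n\ge 2$, and let $A\in\mathbb R^{(n+3)\times(n+3)}$, $B\in\mathbb R^{(n+3)\times(n+1)}$ be the matrices \[ A=\begin{bmatrix}\mathbf 0_{2,2}&A_{12}\\ A_{21}&A_{22}\end{bmatrix},\ A_{12}=\begin{bmatrix}-c_0&\mathbf 0_n^\top\\ a&-a\mathbf 1_n^\top\end{bmatrix},\ A_{21}=\begin{bmatrix}b_0&0&\dots&0\\ d_0&b_1&\dots&b_n\end{bmatrix}^\top,\ A_{22}=\operatorname{diag}(e_0,\dots,e_n), \] \[ B=\begin{bmatrix}\mathbf 0_n^\top&c_0\\ \mathbf 0_n^\top&0\\ \mathbf 0_n^\top & 0\\ \operatorname{diag}(d_1,\dots,d_n)&\mathbf 0_n\end{bmatrix},\qquad a=c_1\left(\sum_{j=1}^n\prod_{\substack{i=1\\ i\neq j}}^n c_i\right)^{-1}\prod_{i=2}^n c_i, \] of the state-space model of a joint of $n$ pipes $P_1,\dots,P_n$ merging into $P_0$, with state $x=[p_{0,r},p_{1,r},q_{0,\ell},q_{1,\ell},\dots,q_{n,\ell}]^\top$ and input $u=[p_{1,\ell},\dots,p_{n,\ell},q_{0,r}]^\top$. Suppose $(x,u)$ is a steady state, i.e. $Ax+Bu=0$, and for $k=1,\dots,n$ let $q_{k,r}$ be defined by \[ \left(\sum_{j=1}^n\prod_{\substack{i=1\\ i\neq j}}^n c_i\right)q_{k,r}=\prod_{\substack{i=1\\ i\neq k}}^n c_i\left(q_{0,\ell}-\sum_{\substack{i=1\\ i\neq k}}^n q_{i,\ell}\right)+\left(\sum_{j=1}^n\prod_{\substack{i=1\\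 i\neq j}}^n c_i-\prod_{\substack{i=1\\ i\neq k}}^n c_i\right)q_{k,\ell}. \] Then $q_{0,\ell}=q_{1,r}+q_{2,r}+\dots+q_{n,r}$ (conservation of mass).
   Context: Coefficients of the linearized isothermal pipe model: $c_j=-\frac{R_sT_0z_0}{A_jL_j}$, $b_j=-\frac{A_j}{L_j}$, $d_j=\frac{A_j}{L_j}+\frac{\lambda_j R_sT_0z_0}{2D_jA_j}\frac{q_{ss,j}|q_{ss,j}|}{p_{\ell,ss,j}^2}-\frac{A_jgh_j}{R_sT_0z_0L_j}$, $e_j=-\frac{\lambda_j R_sT_0z_0}{D_jA_j}\frac{|q_{ss,j}|}{p_{\ell,ss,j}}$, with positive constants $R_s,T_0,z_0$, gravity $g$, and per-pipe area $A_j>0$, length $L_j>0$, diameter $D_j>0$, friction factor $\lambda_j$, elevation difference $h_j$, nominal flow $q_{ss,j}>0$, nominal left pressure $p_{\ell,ss,j}>0$; so all $c_j<0$. Here $p$ is pressure, $q$ mass flow, subscripts $\ell,r$ the left and right pipe ends; $q_{k,r}$ is the outflow of pipe $P_k$ into the junction. $\mathbf 0_{i}$, $\mathbf 0_{i,j}$ are zero vectors/matrices, $\mathbf 1_n$ the all-ones vector. *)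

theory Defs
  imports Complex_Main
begin

text \<open>Matrices are represented as functions nat => nat => real with explicit
index bounds (rows/columns indexed from 0). State index convention:
x 0 = p_{0,r}, x 1 = p_{1,r}, x (k+2) = q_{k,l} for k = 0..n.
Input: u (k-1) = p_{k,l} for k = 1..n, u n = q_{0,r}.\<close>

definition Ssum :: "nat \<Rightarrow> (nat \<Rightarrow> real) \<Rightarrow> real" where
  "Ssum n c = (\<Sum>j=1..n. \<Prod>i\<in>{1..n} - {j}. c i)"

definition coef_a :: "nat \<Rightarrow> (nat \<Rightarrow> real) \<Rightarrow> real" where
  "coef_a n c = c 1 * inverse (Ssum n c) * (\<Prod>i=2..n. c i)"

definition joint_A :: "nat \<Rightarrow> (nat \<Rightarrow> real) \<Rightarrow> (nat \<Rightarrow> real) \<Rightarrow> (nat \<Rightarrow> real)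
    \<Rightarrow> (nat \<Rightarrow> real) \<Rightarrow> nat \<Rightarrow> nat \<Rightarrow> real" where
  "joint_A n b c d e i j =
    (if i = 0 then (if j = 2 then - c 0 else 0)
     else if i = 1 then
       (if j = 2 then coef_a n c else if 3 \<le> j \<and> j \<le> n + 2 then - coef_a n c else 0)
     else
       (let k = i - 2 in
        if j = 0 then (if k = 0 then b 0 else 0)
        else if j = 1 then (if k = 0 then d 0 else b k)
        else if j - 2 = k then e k else 0))"

definition joint_B :: "nat \<Rightarrow> (nat \<Rightarrow> real) \<Rightarrow> (nat \<Rightarrow> real) \<Rightarrow> nat \<Rightarrow> nat \<Rightarrow> real" where
  "joint_B n c d i j =
    (if i = 0 then (if j = n then c 0 else 0)
     else if i \<le> 2 then 0
     else (if j + 3 = i \<and> j < n then d (i - 2) else 0))"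

end

theory Submission
  imports Defs
begin

text \<open>With weights \<open>P k = \<Prod>i\<in>{1..n}-{k}. c i\<close> and \<open>S = \<Sum>k. P k\<close>, summing
  the defining equations of the \<open>q_{k,r}\<close> makes the inflow terms \<open>q_{i,l}\<close> cancel, leaving
  \<open>S * (\<Sum>k. q_{k,r}) = S * q_{0,l}\<close>. As all \<open>c i\<close> are negative, every \<open>P k\<close> has the
  sign of \<open>(-1)^(n-1)\<close>, so \<open>S \<noteq> 0\<close> can be cancelled.\<close>

lemma sum_weighted_split_eq:
  fixes P y :: "'a \<Rightarrow> 'b::comm_ring"
  assumes "finite I"
  shows "(\<Sum>k\<in>I. P k * (x0 - (\<Sum>i\<in>I - {k}. y i)) + (sum P I - P k) * y k)
           = sum P I * x0"
proof -
  have "(\<Sum>k\<in>I. P k * (x0 - (\<Sum>i\<in>I - {k}. y i)) + (sum P I - P k) * y k)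
      = (\<Sum>k\<in>I. P k * x0 - P k * sum y I + sum P I * y k)"
    using assms by (intro sum.cong) (simp_all add: sum_diff1 algebra_simps)
  also have "\<dots> = sum P I * x0"
    by (simp add: sum.distrib sum_subtractf sum_distrib_left sum_distrib_right)
       (subst sum.swap, simp add: mult.commute)
  finally show ?thesis .
qed

lemma sum_prod_remove_nonzero_if_neg:
  fixes c :: "'a \<Rightarrow> 'b::linordered_idom"
  assumes "finite I" "I \<noteq> {}" and neg: "\<And>i. i \<in> I \<Longrightarrow> c i < 0"
  shows "(\<Sum>j\<in>I. \<Prod>i\<in>I - {j}. c i) \<noteq> 0"
proof -
  have term_eq: "(\<Prod>i\<in>I - {j}. c i) = (-1) ^ (card I - 1) * (\<Prod>i\<in>I - {j}. - c i)"
    if "j \<in> I" for j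
  proof -
    have "(\<Prod>i\<in>I - {j}. - c i) = (-1) ^ (card I - 1) * (\<Prod>i\<in>I - {j}. c i)"
      using assms(1) that by (simp add: prod_uminus card_Diff_singleton)
    then show ?thesis by (simp add: power_mult_distrib[symmetric])
  qed
  have "(\<Sum>j\<in>I. \<Prod>i\<in>I - {j}. - c i) > 0"
    using assms by (intro sum_pos prod_pos) auto
  moreover have "(\<Sum>j\<in>I. \<Prod>i\<in>I - {j}. c i)
      = (-1) ^ (card I - 1) * (\<Sum>j\<in>I. \<Prod>i\<in>I - {j}. - c i)"
    by (simp add: term_eq sum_distrib_left)
  ultimately show ?thesis by simp
qed

theorem corollary2:
  fixes n :: nat
    and Rs T0 z0 g :: real
    and Ar L D lam h qss pss :: "nat \<Rightarrow> real"
    and b c d e :: "nat \<Rightarrow> real"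
    and x u qr :: "nat \<Rightarrow> real"
  assumes n2: "n \<ge> 2"
    and consts_pos: "Rs > 0" "T0 > 0" "z0 > 0" "g > 0"
    and params_pos: "\<And>j. j \<le> n \<Longrightarrow> Ar j > 0 \<and> L j > 0 \<and> D j > 0 \<and> qss j > 0 \<and> pss j > 0"
    and c_def: "\<And>j. j \<le> n \<Longrightarrow> c j = - (Rs * T0 * z0) / (Ar j * L j)"
    and b_def: "\<And>j. j \<le> n \<Longrightarrow> b j = - Ar j / L j"
    and d_def: "\<And>j. j \<le> n \<Longrightarrow> d j = Ar j / L j
        + (lam j * Rs * T0 * z0) / (2 * D j * Ar j) * (qss j * \<bar>qss j\<bar>) / (pss j)\<^sup>2
        - (Ar j * g * h j) / (Rs * T0 * z0 * L j)"
    and e_def: "\<And>j. j \<le> n \<Longrightarrow> e j = - (lam j * Rs * T0 * z0) / (D j * Ar j) * \<bar>qss j\<bar> / pss j"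
    and steady: "\<And>i. i < n + 3 \<Longrightarrow>
        (\<Sum>j<n+3. joint_A n b c d e i j * x j) + (\<Sum>j<n+1. joint_B n c d i j * u j) = 0"
    and qr_def: "\<And>k. 1 \<le> k \<Longrightarrow> k \<le> n \<Longrightarrow>
        Ssum n c * qr k =
          (\<Prod>i\<in>{1..n} - {k}. c i) * (x 2 - (\<Sum>i\<in>{1..n} - {k}. x (i + 2)))
          + (Ssum n c - (\<Prod>i\<in>{1..n} - {k}. c i)) * x (k + 2)"
  shows "x 2 = (\<Sum>k=1..n. qr k)"
proof -
  define P where "P k = (\<Prod>i\<in>{1..n} - {k}. c i)" for k
  have S_eq: "Ssum n c = sum P {1..n}"
    unfolding Ssum_def P_def ..
  have c_neg: "c i < 0" if "i \<le> n" for i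
    using c_def[OF that] params_pos[OF that] consts_pos by (simp add: divide_neg_pos)
  have S_nonzero: "Ssum n c \<noteq> 0"
    unfolding Ssum_def using n2 by (intro sum_prod_remove_nonzero_if_neg) (auto intro: c_neg)
  have "Ssum n c * (\<Sum>k=1..n. qr k)
      = (\<Sum>k=1..n. P k * (x 2 - (\<Sum>i\<in>{1..n} - {k}. x (i + 2))) + (sum P {1..n} - P k) * x (k + 2))"
    unfolding sum_distrib_left S_eq[symmetric] P_def by (intro sum.cong) (simp_all add: qr_def)
  also have "\<dots> = Ssum n c * x 2"
    using sum_weighted_split_eq[where I = "{1..n}" and P = P and y = "\<lambda>i. x (i + 2)"]
    by (simp add: S_eq)
  finally show ?thesis
    using S_nonzero by simp
qed

end
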